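(* Let $m\ge 3$ and $n$ be integers, and let $k$ be an integer with $1\le k\le n^2-3n+2$. Write $k=(n-1)q+r$ with integers $q\ge 0$ and $1\le r\le n-1$. Let $M_1=(\mu_{ij})$ be the $n\times n$ $0/1$ matrix with $\mu_{1,n-1}=\mu_{1,n}=1$, $\mu_{i,i-1}=1$ for $2\le i\le n$, and all other entries $0$. Let $\mathbb{A}_k=(a^{(k)}_{i_1\ldots i_m})$ be the order $m$, dimension $n$ nonnegative tensor with: (a) $a^{(k)}_{ij\ldots j}=\mu_{ij}$ for all $i,j\in[n]$; (b) $a^{(k)}_{ii_2\ldots i_m}=1$ whenever $i\in[n]\setminus\{r-q,r-q+1,\ldots,r,r+1\}\pmod n$ and the set of distinct values among $i_2,\ldots,i_m$ equals $\{r-q-1,r\}\pmod n$; (c) all other entries equal $0$. Then (i) $\gamma_j(\mathbb{A}_k)=k+n-j$ for $j=1,\ldots,n-1$ and $\gamma_n(\mathbb{A}_k)=k+n$; (ii) $\gamma(\mathbb{A}_k)=k+n$.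
   Context: Tensors of order $m$ and dimension $n$ have entries indexed by $[n]^m$, $[n]=\{1,\ldots,n\}$. For an integer $a$, $|a|_n$ denotes the least positive integer congruent to $a$ modulo $n$, and for integers $a_1,\ldots,a_s$ the notation $\{a_1,\ldots,a_s\}\pmod n$ means the set $\{|a_1|_n,\ldots,|a_s|_n\}\subseteq[n]$. General product: for a tensor $\mathbb{A}$ of order $m\ge2$ and $\mathbb{B}$ of order $k\ge1$, both of dimension $n$, $\mathbb{A}\mathbb{B}$ is the tensor of order $(m-1)(k-1)+1$ with entries $(\mathbb{A}\mathbb{B})_{i\alpha_1\ldots\alpha_{m-1}}=\sum_{i_2,\ldots,i_m=1}^n a_{ii_2\ldots i_m}b_{i_2\alpha_1}\cdots b_{i_m\alpha_{m-1}}$ ($i\in[n]$, $\alpha_1,\ldots,\alpha_{m-1}\in[n]^{k-1}$); this product is associative, and $\mathbb{A}^k$ denotes the $k$-fold product. The majorization matrix $M(\mathbb{C})$ of a tensor $\mathbb{C}$ is the $n\times n$ matrix with $(M(\mathbb{C}))_{ij}=c_{ij\ldots j}$. For $j\in[n]$, a nonnegative tensor $\mathbb{A}$ is $j$-primitive if there is $k\ge1$ with $(M(\mathbb{A}^k))_{uj}>0$ for all $u\in[n]$; the least such $k$ is $\gamma_j(\mathbb{A})$. $\mathbb{A}$ is primitive if there is $r\ge1$ with $M(\mathbb{A}^r)>0$ entrywise, and the least such $r$ is the primitive degree $\gamma(\mathbb{A})$ (equivalently, the least $r$ with $T_{\mathbb{A}}^r(x)>0$ for all nonnegative nonzero $x$,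 where $T_{\mathbb{A}}(x)=(\mathbb{A}x)^{[1/(m-1)]}$). *)

theory Defs
  imports Complex_Main
begin

text \<open>Tensors of dimension n are functions from index lists to reals; indices range
over {1..n}. The order is carried as an explicit parameter.\<close>

type_synonym tensor = "nat list \<Rightarrow> real"

definition idx_lists :: "nat \<Rightarrow> nat \<Rightarrow> nat list set" where
  "idx_lists n l = {xs. length xs = l \<and> set xs \<subseteq> {1..n}}"

text \<open>General product: A of order m, B of order k, both of dimension n.
  The result has order (m-1)(k-1)+1; an index list i # rest is split into
  the blocks alpha_1, ..., alpha_(m-1) of length k-1.\<close>
definition tprod :: "nat \<Rightarrow> nat \<Rightarrow> nat \<Rightarrow> tensor \<Rightarrow> tensor \<Rightarrow> tensor" where
  "tprod n m k A B = (\<lambda>idx.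
     \<Sum>is\<in>idx_lists n (m - 1).
        A (hd idx # is) *
        (\<Prod>j<m - 1. B (is ! j # take (k - 1) (drop (j * (k - 1)) (tl idx)))))"

fun tpow :: "nat \<Rightarrow> nat \<Rightarrow> tensor \<Rightarrow> nat \<Rightarrow> tensor" where
  "tpow n m A 0 = A"
| "tpow n m A (Suc 0) = A"
| "tpow n m A (Suc (Suc k)) = tprod n m ((m - 1) ^ Suc k + 1) A (tpow n m A (Suc k))"

definition tpow_order :: "nat \<Rightarrow> nat \<Rightarrow> nat" where
  "tpow_order m k = (m - 1) ^ k + 1"

definition maj :: "nat \<Rightarrow> tensor \<Rightarrow> nat \<Rightarrow> nat \<Rightarrow> real" where
  "maj ord C i j = C (i # replicate (ord - 1) j)"

definition j_primitive :: "nat \<Rightarrow> nat \<Rightarrow> tensor \<Rightarrow> nat \<Rightarrow> bool" where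
  "j_primitive n m A j \<longleftrightarrow> (\<exists>k\<ge>1. \<forall>u\<in>{1..n}. maj (tpow_order m k) (tpow n m A k) u j > 0)"

definition gamma_j :: "nat \<Rightarrow> nat \<Rightarrow> tensor \<Rightarrow> nat \<Rightarrow> nat" where
  "gamma_j n m A j = (LEAST k. k \<ge> 1 \<and> (\<forall>u\<in>{1..n}. maj (tpow_order m k) (tpow n m A k) u j > 0))"

definition primitive :: "nat \<Rightarrow> nat \<Rightarrow> tensor \<Rightarrow> bool" where
  "primitive n m A \<longleftrightarrow> (\<exists>r\<ge>1. \<forall>u\<in>{1..n}. \<forall>j\<in>{1..n}. maj (tpow_order m r) (tpow n m A r) u j > 0)"

definition prim_degree :: "nat \<Rightarrow> nat \<Rightarrow> tensor \<Rightarrow> nat" where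
  "prim_degree n m A = (LEAST r. r \<ge> 1 \<and> (\<forall>u\<in>{1..n}. \<forall>j\<in>{1..n}. maj (tpow_order m r) (tpow n m A r) u j > 0))"

text \<open>|a|_n: least positive integer congruent to a modulo n.\<close>
definition modn :: "nat \<Rightarrow> int \<Rightarrow> nat" where
  "modn n a = nat ((a - 1) mod int n + 1)"

definition mu1 :: "nat \<Rightarrow> nat \<Rightarrow> nat \<Rightarrow> bool" where
  "mu1 n i j \<longleftrightarrow> (i = 1 \<and> (j = n - 1 \<or> j = n)) \<or> (2 \<le> i \<and> i \<le> n \<and> j = i - 1)"

text \<open>The tensor A_k (with k = (n-1)q + r); only entries with indices in [n] matter.\<close>
definition tensorA :: "nat \<Rightarrow> int \<Rightarrow> int \<Rightarrow> tensor" where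
  "tensorA n q r = (\<lambda>idx.
     if set idx \<subseteq> {1..n} \<and> idx \<noteq> [] then
       (let i = hd idx; t = tl idx in
        if t \<noteq> [] \<and> set t = {hd t} then (if mu1 n i (hd t) then 1 else 0)
        else if i \<notin> modn n ` {r - q .. r + 1} \<and> set t = modn n ` {r - q - 1, r} then 1
        else 0)
     else 0)"

end

theory Submission
  imports Defs
begin

text \<open>Column j of M(A^t) is positive exactly on the set obtained from {j} by t applications
  of the map S \<mapsto> {rows having a positive entry whose other indices all lie in S}. For A_k this
  map follows the cycle of M_1 backwards and, once both |r-q-1|_n and |r|_n are reached, adds every
  row outside the window {r-q,...,r+1} (mod n). Starting from {n-1}, the iterates are cyclic arcs
  that gain one element per turn around the cycle; the extra rows only fall into the next arc until,
  after exactly k steps, the arc of q + 2 elements ending at r is reached, and then everything is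
  filled at step k + 1. From {j} it takes n - 1 - j steps to reach {n-1} (n steps from {n}), so
  gamma_j = k + n - j for j < n, and gamma_n = k + n is the primitive degree.\<close>

lemma finite_idx_lists: "finite (idx_lists n l)"
proof -
  have "idx_lists n l = {xs. set xs \<subseteq> {1..n} \<and> length xs = l}"
    unfolding idx_lists_def by auto
  then show ?thesis using finite_lists_length_eq[of "{1..n}" l] by simp
qed

lemma tpow_nonneg: "\<forall>xs. 0 \<le> A xs \<Longrightarrow> 0 \<le> tpow n m A t xs"
  by (induction n m A t arbitrary: xs rule: tpow.induct)
     (auto simp: tprod_def intro!: sum_nonneg prod_nonneg mult_nonneg_nonneg)

lemma take_drop_replicate_mult:
  "l < M \<Longrightarrow> take P (drop (l * P) (replicate (M * P) x)) = replicate P x"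
proof -
  assume "l < M"
  then obtain d where "M = Suc (l + d)" using less_imp_Suc_add by blast
  then have "M * P - l * P = P + d * P" by (simp add: algebra_simps)
  then show ?thesis by (simp add: min_def)
qed

lemma maj_tpow_Suc_Suc:
  "maj (tpow_order m (Suc (Suc t))) (tpow n m A (Suc (Suc t))) u j =
   (\<Sum>xs\<in>idx_lists n (m - 1). A (u # xs) *
      (\<Prod>l<m - 1. maj (tpow_order m (Suc t)) (tpow n m A (Suc t)) (xs ! l) j))"
proof -
  let ?P = "(m - 1) ^ Suc t"
  have blocks: "take ?P (drop (l * ?P) (replicate ((m - 1) ^ Suc (Suc t)) j)) = replicate ?P j"
    if "l \<in> {..<m - 1}" for l
    using take_drop_replicate_mult[of l "m - 1" ?P j] that by (simp add: mult.commute)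
  show ?thesis
    unfolding maj_def tpow_order_def tpow.simps tprod_def list.sel add_diff_cancel_right'
    by (intro sum.cong refl arg_cong[where f="\<lambda>x. _ * x"] prod.cong) (simp only: blocks)
qed

lemma positive_maj_tpow_Suc_Suc:
  assumes nonneg: "\<forall>xs. 0 \<le> A xs"
  shows "0 < maj (tpow_order m (Suc (Suc t))) (tpow n m A (Suc (Suc t))) u j \<longleftrightarrow>
    (\<exists>xs\<in>idx_lists n (m - 1). 0 < A (u # xs) \<and>
       (\<forall>x\<in>set xs. 0 < maj (tpow_order m (Suc t)) (tpow n m A (Suc t)) x j))"
proof -
  let ?B = "\<lambda>x. maj (tpow_order m (Suc t)) (tpow n m A (Suc t)) x j"
  let ?f = "\<lambda>xs. A (u # xs) * (\<Prod>l<m - 1. ?B (xs ! l))"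
  have B_nonneg: "0 \<le> ?B x" for x
    unfolding maj_def using tpow_nonneg[OF nonneg] by blast
  have f_nonneg: "0 \<le> ?f xs" for xs
    using nonneg B_nonneg by (simp add: prod_nonneg)
  have f_pos: "0 < ?f xs \<longleftrightarrow> 0 < A (u # xs) \<and> (\<forall>x\<in>set xs. 0 < ?B x)"
    if "xs \<in> idx_lists n (m - 1)" for xs
  proof -
    have "length xs = m - 1" using that by (simp add: idx_lists_def)
    then have "(\<Prod>l<m - 1. ?B (xs ! l)) \<noteq> 0 \<longleftrightarrow> (\<forall>x\<in>set xs. ?B x \<noteq> 0)"
      by (auto simp: all_set_conv_all_nth)
    then show ?thesis
      using nonneg B_nonneg f_nonneg[of xs]
      by (smt (verit) mult_eq_0_iff prod_nonneg)
  qed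
  have "0 < sum ?f (idx_lists n (m - 1)) \<longleftrightarrow> (\<exists>xs\<in>idx_lists n (m - 1). 0 < ?f xs)"
    using sum_nonneg_eq_0_iff[OF finite_idx_lists, where f = ?f] f_nonneg
    by (smt (verit) sum_nonneg)
  with f_pos show ?thesis
    by (simp only: maj_tpow_Suc_Suc) blast
qed

definition support_step :: "nat \<Rightarrow> nat \<Rightarrow> tensor \<Rightarrow> nat set \<Rightarrow> nat set" where
  "support_step n m A S =
     {u \<in> {1..n}. \<exists>xs\<in>idx_lists n (m - 1). 0 < A (u # xs) \<and> set xs \<subseteq> S}"

lemma support_step_singleton:
  assumes "2 \<le> m" and "j \<in> {1..n}"
  shows "support_step n m A {j} = {u \<in> {1..n}. 0 < A (u # replicate (m - 1) j)}"
proof -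
  have "xs \<in> idx_lists n (m - 1) \<and> set xs \<subseteq> {j} \<longleftrightarrow> xs = replicate (m - 1) j" for xs
  proof
    assume "xs \<in> idx_lists n (m - 1) \<and> set xs \<subseteq> {j}"
    then show "xs = replicate (m - 1) j"
      by (intro replicate_eqI) (auto simp: idx_lists_def)
  next
    assume "xs = replicate (m - 1) j"
    then show "xs \<in> idx_lists n (m - 1) \<and> set xs \<subseteq> {j}"
      using assms by (simp add: idx_lists_def)
  qed
  then have "(\<exists>xs\<in>idx_lists n (m - 1). 0 < A (u # xs) \<and> set xs \<subseteq> {j}) \<longleftrightarrow>
      0 < A (u # replicate (m - 1) j)" for u
    by (metis (no_types, lifting))
  then show ?thesis unfolding support_step_def by simp
qed

lemma positive_column_support:
  assumes nonneg: "\<forall>xs. 0 \<le> A xs" and "2 \<le> m" and j: "j \<in> {1..n}" and "1 \<le> t"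
  shows "{u \<in> {1..n}. 0 < maj (tpow_order m t) (tpow n m A t) u j} = (support_step n m A ^^ t) {j}"
proof -
  obtain t' where "t = Suc t'" using \<open>1 \<le> t\<close> by (cases t) auto
  have "{u \<in> {1..n}. 0 < maj (tpow_order m (Suc t')) (tpow n m A (Suc t')) u j}
        = (support_step n m A ^^ Suc t') {j}"
  proof (induction t')
    case 0
    have "maj (tpow_order m 1) (tpow n m A 1) u j = A (u # replicate (m - 1) j)" for u
      by (simp add: maj_def tpow_order_def)
    then show ?case using support_step_singleton[OF \<open>2 \<le> m\<close> j] by simp
  next
    case (Suc t')
    let ?B = "\<lambda>x. 0 < maj (tpow_order m (Suc t')) (tpow n m A (Suc t')) x j"
    have "set xs \<subseteq> {x \<in> {1..n}. ?B x} \<longleftrightarrow> (\<forall>x\<in>set xs. ?B x)"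
      if "xs \<in> idx_lists n (m - 1)" for xs
      using that by (auto simp: idx_lists_def)
    then have "{u \<in> {1..n}. 0 < maj (tpow_order m (Suc (Suc t'))) (tpow n m A (Suc (Suc t'))) u j}
        = support_step n m A {x \<in> {1..n}. ?B x}"
      unfolding support_step_def positive_maj_tpow_Suc_Suc[OF nonneg]
      by (intro Collect_cong conj_cong refl bex_cong) simp_all
    also have "\<dots> = (support_step n m A ^^ Suc (Suc t')) {j}"
      by (simp only: Suc.IH funpow.simps comp_apply)
    finally show ?case .
  qed
  then show ?thesis using \<open>t = Suc t'\<close> by simp
qed

definition positive_column :: "nat \<Rightarrow> nat \<Rightarrow> tensor \<Rightarrow> nat \<Rightarrow> nat \<Rightarrow> bool" where
  "positive_column n m A t j \<longleftrightarrow> (\<forall>u\<in>{1..n}. 0 < maj (tpow_order m t) (tpow n m A t) u j)"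

lemma positive_column_iff_support:
  assumes "\<forall>xs. 0 \<le> A xs" and "2 \<le> m" and "j \<in> {1..n}" and "1 \<le> t"
  shows "positive_column n m A t j \<longleftrightarrow> (support_step n m A ^^ t) {j} = {1..n}"
  unfolding positive_column_def positive_column_support[OF assms, symmetric] by auto

lemma gamma_j_eqI:
  assumes "1 \<le> g" and "\<And>t. 1 \<le> t \<Longrightarrow> positive_column n m A t j \<longleftrightarrow> g \<le> t"
  shows "j_primitive n m A j \<and> gamma_j n m A j = g"
proof -
  have "positive_column n m A g j" using assms by simp
  then have least: "1 \<le> g \<and> (\<forall>u\<in>{1..n}. 0 < maj (tpow_order m g) (tpow n m A g) u j)"
    using assms(1) unfolding positive_column_def by simp
  then have "j_primitive n m A j" unfolding j_primitive_def by blast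
  moreover have "gamma_j n m A j = g"
    unfolding gamma_j_def
  proof (rule Least_equality)
    fix t assume "1 \<le> t \<and> (\<forall>u\<in>{1..n}. 0 < maj (tpow_order m t) (tpow n m A t) u j)"
    then show "g \<le> t" using assms(2)[of t] unfolding positive_column_def by simp
  qed (rule least)
  ultimately show ?thesis ..
qed

lemma prim_degree_eq_Max:
  assumes "1 \<le> n" and "\<And>j. j \<in> {1..n} \<Longrightarrow> 1 \<le> g j"
    and "\<And>j t. j \<in> {1..n} \<Longrightarrow> 1 \<le> t \<Longrightarrow> positive_column n m A t j \<longleftrightarrow> g j \<le> t"
  shows "primitive n m A \<and> prim_degree n m A = Max (g ` {1..n})"
proof -
  let ?d = "Max (g ` {1..n})"
  have "?d \<in> g ` {1..n}" using \<open>1 \<le> n\<close> by (intro Max_in) auto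
  then obtain j0 where j0: "j0 \<in> {1..n}" "g j0 = ?d" by (metis imageE)
  have d_ge: "g j \<le> ?d" if "j \<in> {1..n}" for j using that by simp
  have "1 \<le> ?d" using assms(2)[OF j0(1)] j0(2) by simp
  have "positive_column n m A ?d j" if "j \<in> {1..n}" for j
    using assms(3)[OF that \<open>1 \<le> ?d\<close>] d_ge[OF that] by simp
  then have pos_d: "\<forall>u\<in>{1..n}. \<forall>j\<in>{1..n}. 0 < maj (tpow_order m ?d) (tpow n m A ?d) u j"
    unfolding positive_column_def by simp
  show ?thesis
  proof
    show "primitive n m A" unfolding primitive_def using pos_d \<open>1 \<le> ?d\<close> by blast
    show "prim_degree n m A = ?d"
      unfolding prim_degree_def
    proof (rule Least_equality)
      fix t assume t: "1 \<le> t \<and> (\<forall>u\<in>{1..n}. \<forall>j\<in>{1..n}. 0 < maj (tpow_order m t) (tpow n m A t) u j)"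
      then have "positive_column n m A t j0" using j0(1) unfolding positive_column_def by blast
      then show "?d \<le> t" using assms(3)[OF j0(1)] t j0(2) by simp
    qed (use pos_d \<open>1 \<le> ?d\<close> in blast)
  qed
qed

lemma int_modn:
  assumes "1 - int n \<le> x" and "x \<le> int n"
  shows "int (modn n x) = (if 1 \<le> x then x else x + int n)"
proof (cases "1 \<le> x")
  case True
  then have "(x - 1) mod int n = x - 1" using assms by (intro mod_pos_pos_trivial) auto
  then show ?thesis using True by (simp add: modn_def)
next
  case False
  have "(x - 1) mod int n = (x - 1 + int n) mod int n" by simp
  also have "\<dots> = x - 1 + int n" using assms False by (intro mod_pos_pos_trivial) auto
  finally show ?thesis using False assms by (simp add: modn_def)
qed

lemma lex_le_of_mult_add_le:
  fixes N c s q r :: int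
  assumes "0 < N" "1 \<le> s" "s \<le> N" "1 \<le> r" "r \<le> N" "N * c + s \<le> N * q + r"
  shows "c < q \<or> (c = q \<and> s \<le> r)"
proof (rule ccontr)
  assume "\<not> ?thesis"
  then have "q < c \<or> (c = q \<and> r < s)" by auto
  then show False
  proof
    assume "q < c"
    then have "N * (q + 1) \<le> N * c" using assms(1) by (intro mult_left_mono) auto
    then show False using assms by (simp add: algebra_simps)
  next
    assume "c = q \<and> r < s"
    then show False using assms(6) by simp
  qed
qed

lemma tensorA_nonneg: "\<forall>xs. 0 \<le> tensorA n q r xs"
  unfolding tensorA_def by (auto simp: Let_def)

locale tensorA_params =
  fixes n k :: nat and q r :: int
  assumes n_ge_3: "3 \<le> n"
    and k_eq: "int k = (int n - 1) * q + r"
    and q_nonneg: "0 \<le> q" and q_le: "q \<le> int n - 3"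
    and r_ge_1: "1 \<le> r" and r_le: "r \<le> int n - 1"
begin

definition alpha :: nat where "alpha = modn n (r - q - 1)"
definition beta :: nat where "beta = modn n r"
definition excluded :: "nat set" where "excluded = modn n ` {r - q .. r + 1}"

lemma int_alpha: "int alpha = (if 1 \<le> r - q - 1 then r - q - 1 else r - q - 1 + int n)"
  unfolding alpha_def by (rule int_modn) (use q_le q_nonneg r_ge_1 r_le in auto)

lemma int_beta: "int beta = r"
  unfolding beta_def using int_modn[of n r] r_ge_1 r_le by simp

lemma alpha_mem: "alpha \<in> {1..n}"
  using int_alpha q_le q_nonneg r_ge_1 r_le by (auto split: if_splits)

lemma beta_mem: "beta \<in> {1..n}"
  using int_beta r_ge_1 r_le by auto

lemma alpha_ne_beta: "alpha \<noteq> beta"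
  using int_alpha int_beta q_le q_nonneg r_ge_1 r_le by (auto split: if_splits)

lemma mem_excluded_iff:
  assumes u: "u \<in> {1..n}"
  shows "u \<in> excluded \<longleftrightarrow> (r - q \<le> int u \<and> int u \<le> r + 1) \<or> r - q \<le> int u - int n"
proof
  assume "u \<in> excluded"
  then obtain x where x: "x \<in> {r - q .. r + 1}" "u = modn n x" unfolding excluded_def by auto
  then have "int u = (if 1 \<le> x then x else x + int n)"
    using int_modn[of n x] q_le q_nonneg r_ge_1 r_le by auto
  then show "(r - q \<le> int u \<and> int u \<le> r + 1) \<or> r - q \<le> int u - int n"
    using x(1) by (auto split: if_splits)
next
  assume h: "(r - q \<le> int u \<and> int u \<le> r + 1) \<or> r - q \<le> int u - int n"
  show "u \<in> excluded"
  proof (cases "r - q \<le> int u \<and> int u \<le> r + 1")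
    case True
    have "int (modn n (int u)) = int u" using int_modn[of n "int u"] u by auto
    then show ?thesis unfolding excluded_def using True by (auto intro!: image_eqI[where x = "int u"])
  next
    case False
    have "int (modn n (int u - int n)) = int u" using int_modn[of n "int u - int n"] u by auto
    moreover have "int u - int n \<in> {r - q .. r + 1}" using h False u r_ge_1 by auto
    ultimately show ?thesis unfolding excluded_def by (auto intro!: image_eqI[where x = "int u - int n"])
  qed
qed

lemma tensorA_pos_iff:
  assumes "3 \<le> m" and xs: "xs \<in> idx_lists n (m - 1)" and u: "u \<in> {1..n}"
  shows "0 < tensorA n q r (u # xs) \<longleftrightarrow>
    (set xs = {hd xs} \<and> mu1 n u (hd xs)) \<or> (u \<notin> excluded \<and> set xs = {alpha, beta})"
proof -
  have "set xs \<subseteq> {1..n}" and "xs \<noteq> []"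
    using xs \<open>3 \<le> m\<close> by (auto simp: idx_lists_def)
  moreover have "set xs = {alpha, beta} \<Longrightarrow> set xs \<noteq> {hd xs}"
    using alpha_ne_beta by (metis insert_subset singleton_iff subset_insertI insertI1)
  moreover have "modn n ` {r - q - 1, r} = {alpha, beta}" by (simp add: alpha_def beta_def)
  ultimately show ?thesis
    using u unfolding tensorA_def excluded_def[symmetric] by (auto simp: Let_def)
qed

definition step :: "nat set \<Rightarrow> nat set" where
  "step S = {u \<in> {1..n}. (\<exists>j\<in>S. mu1 n u j) \<or> (u \<notin> excluded \<and> alpha \<in> S \<and> beta \<in> S)}"

lemma support_step_tensorA:
  assumes m: "3 \<le> m"
  shows "support_step n m (tensorA n q r) = step"
proof (intro ext set_eqI iffI)
  fix S u
  assume "u \<in> support_step n m (tensorA n q r) S"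
  then obtain xs where u: "u \<in> {1..n}" and xs: "xs \<in> idx_lists n (m - 1)"
    and pos: "0 < tensorA n q r (u # xs)" and sub: "set xs \<subseteq> S"
    unfolding support_step_def by blast
  have "hd xs \<in> S" using xs sub m by (cases xs) (auto simp: idx_lists_def)
  then show "u \<in> step S"
    using tensorA_pos_iff[OF m xs u] pos sub u unfolding step_def by auto
next
  fix S u
  assume "u \<in> step S"
  then have u: "u \<in> {1..n}" unfolding step_def by blast
  from \<open>u \<in> step S\<close> consider (mu1) j where "j \<in> S" "mu1 n u j"
    | (pair) "u \<notin> excluded" "alpha \<in> S" "beta \<in> S"
    unfolding step_def by blast
  then show "u \<in> support_step n m (tensorA n q r) S"
  proof cases
    case mu1
    let ?xs = "replicate (m - 1) j"
    have "j \<in> {1..n}" using \<open>mu1 n u j\<close> n_ge_3 by (auto simp: mu1_def)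
    then have xs: "?xs \<in> idx_lists n (m - 1)" by (auto simp: idx_lists_def)
    have "hd ?xs = j" and "set ?xs = {j}" using m by (cases "m - 1"; simp)+
    then have "0 < tensorA n q r (u # ?xs)" using tensorA_pos_iff[OF m xs u] mu1 by simp
    moreover have "set ?xs \<subseteq> S" using \<open>set ?xs = {j}\<close> mu1 by simp
    ultimately show ?thesis using xs u unfolding support_step_def by blast
  next
    case pair
    let ?xs = "alpha # replicate (m - 2) beta"
    have "set ?xs = {alpha, beta}" using m by auto
    then have xs: "?xs \<in> idx_lists n (m - 1)" using alpha_mem beta_mem m by (auto simp: idx_lists_def)
    have "0 < tensorA n q r (u # ?xs)"
      using tensorA_pos_iff[OF m xs u] pair \<open>set ?xs = {alpha, beta}\<close> by blast
    then show ?thesis using xs u pair \<open>set ?xs = {alpha, beta}\<close> unfolding support_step_def by auto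
  qed
qed

text \<open>arc c s: the c + 2 cyclically consecutive indices ending at s.\<close>

definition arc :: "int \<Rightarrow> int \<Rightarrow> nat set" where
  "arc c s = {u \<in> {1..n}. (s - int u) mod int n \<le> c + 1}"

lemma mem_arc:
  assumes "u \<in> {1..n}" and "1 \<le> s" and "s \<le> int n"
  shows "u \<in> arc c s \<longleftrightarrow> (int u \<le> s \<and> s - int u \<le> c + 1) \<or> (s < int u \<and> s + int n - int u \<le> c + 1)"
proof (cases "int u \<le> s")
  case True
  then have "(s - int u) mod int n = s - int u" using assms by (intro mod_pos_pos_trivial) auto
  then show ?thesis using True assms(1) by (simp add: arc_def)
next
  case False
  have "(s - int u) mod int n = (s - int u + int n) mod int n" by simp
  also have "\<dots> = s - int u + int n" using assms False by (intro mod_pos_pos_trivial) auto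
  finally have "(s - int u) mod int n = s + int n - int u" by simp
  with False assms(1) show ?thesis by (simp add: arc_def)
qed

definition arc_next :: "int \<Rightarrow> int \<Rightarrow> nat set" where
  "arc_next c s = (if s \<le> int n - 2 then arc c (s + 1) else arc (c + 1) 1)"

lemma mem_arc_next:
  assumes "u \<in> {1..n}" and "1 \<le> s" and "s \<le> int n - 1"
  shows "u \<in> arc_next c s \<longleftrightarrow>
    (if s \<le> int n - 2
     then (int u \<le> s + 1 \<and> s + 1 - int u \<le> c + 1) \<or> (s + 1 < int u \<and> s + 1 + int n - int u \<le> c + 1)
     else (int u \<le> 1 \<and> 1 - int u \<le> c + 2) \<or> (1 < int u \<and> 1 + int n - int u \<le> c + 2))"
  using assms mem_arc[OF assms(1)] by (simp add: arc_next_def algebra_simps)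

text \<open>Pulling an arc back along the cycle of M_1 shifts its end by one; passing through n
  it also gains the index 1, since row 1 of M_1 has two ones.\<close>

lemma mu1_preimage_arc:
  assumes c: "-1 \<le> c" "c \<le> int n - 3" and s: "1 \<le> s" "s \<le> int n - 1" and u: "u \<in> {1..n}"
  shows "(\<exists>j\<in>arc c s. mu1 n u j) \<longleftrightarrow> u \<in> arc_next c s"
proof (cases "u = 1")
  case True
  have "(\<exists>j\<in>arc c s. mu1 n u j) \<longleftrightarrow> n - 1 \<in> arc c s \<or> n \<in> arc c s"
    using True n_ge_3 by (auto simp: mu1_def)
  also have "\<dots> \<longleftrightarrow> ((int n - 1 \<le> s \<and> s - (int n - 1) \<le> c + 1) \<or> (s < int n - 1 \<and> s + 1 \<le> c + 1))
      \<or> ((int n \<le> s \<and> s - int n \<le> c + 1) \<or> (s < int n \<and> s \<le> c + 1))"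
    using mem_arc[of "n - 1" s c] mem_arc[of n s c] s n_ge_3 by (auto simp: of_nat_diff)
  finally show ?thesis unfolding mem_arc_next[OF u s] using True c s by auto
next
  case False
  then have u2: "2 \<le> u" using u by auto
  then have u1: "u - 1 \<in> {1..n}" using u by auto
  have "(\<exists>j\<in>arc c s. mu1 n u j) \<longleftrightarrow> u - 1 \<in> arc c s"
    using False u2 u by (auto simp: mu1_def)
  also have "\<dots> \<longleftrightarrow> (int u - 1 \<le> s \<and> s - (int u - 1) \<le> c + 1) \<or> (s < int u - 1 \<and> s + int n - (int u - 1) \<le> c + 1)"
    using mem_arc[OF u1, of s c] u2 s by (simp add: of_nat_diff)
  finally show ?thesis unfolding mem_arc_next[OF u s] using u2 u c s by auto
qed

lemma step_subset: "step S \<subseteq> {1..n}"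
  unfolding step_def by blast

text \<open>Before the orbit reaches arc q r, the extra entries of type (b) add nothing:
  whenever both alpha and beta already lie on the arc, every row outside the excluded
  range is already on the next arc.\<close>

lemma step_arc:
  assumes c: "-1 \<le> c" and s: "1 \<le> s" "s \<le> int n - 1" and before: "c < q \<or> (c = q \<and> s < r)"
  shows "step (arc c s) = arc_next c s"
proof (rule set_eqI)
  fix u
  have c_le: "c \<le> int n - 3" using before q_le by auto
  have arc_next_sub: "arc_next c s \<subseteq> {1..n}" by (auto simp: arc_next_def arc_def)
  show "u \<in> step (arc c s) \<longleftrightarrow> u \<in> arc_next c s"
  proof (cases "u \<in> {1..n}")
    case False
    then show ?thesis using arc_next_sub step_subset by blast
  next
    case u: True
    have "u \<in> arc_next c s" if "u \<notin> excluded" "alpha \<in> arc c s" "beta \<in> arc c s"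
    proof -
      have "(int alpha \<le> s \<and> s - int alpha \<le> c + 1) \<or> (s < int alpha \<and> s + int n - int alpha \<le> c + 1)"
        using mem_arc[OF alpha_mem, of s c] that s by simp
      moreover have "(r \<le> s \<and> s - r \<le> c + 1) \<or> (s < r \<and> s + int n - r \<le> c + 1)"
        using mem_arc[OF beta_mem, of s c] that s int_beta by simp
      moreover have "\<not> ((r - q \<le> int u \<and> int u \<le> r + 1) \<or> r - q \<le> int u - int n)"
        using mem_excluded_iff[OF u] that by simp
      ultimately show ?thesis
        unfolding mem_arc_next[OF u s] using int_alpha c s before q_nonneg r_ge_1 r_le u q_le
        by (auto split: if_splits)
    qed
    then show ?thesis
      using mu1_preimage_arc[OF c c_le s u] u unfolding step_def by auto
  qed
qed

lemma step_arc_q_r: "step (arc q r) = {1..n}"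
proof (rule set_eqI)
  fix u
  show "u \<in> step (arc q r) \<longleftrightarrow> u \<in> {1..n}"
  proof (cases "u \<in> {1..n}")
    case False
    then show ?thesis using step_subset by blast
  next
    case u: True
    have "alpha \<in> arc q r" "beta \<in> arc q r"
      using mem_arc[OF alpha_mem, of r q] mem_arc[OF beta_mem, of r q] int_alpha int_beta
        q_nonneg r_ge_1 r_le q_le by (auto split: if_splits)
    moreover have "u \<in> arc_next q r" if "u \<in> excluded"
      unfolding mem_arc_next[OF u r_ge_1 r_le] using that mem_excluded_iff[OF u] u
        q_nonneg r_ge_1 r_le q_le by (auto split: if_splits)
    ultimately show ?thesis
      using mu1_preimage_arc[of q r u] q_nonneg q_le r_ge_1 r_le u unfolding step_def by auto
  qed
qed

lemma step_full: "step {1..n} = {1..n}"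
proof -
  have "u \<in> step {1..n}" if u: "u \<in> {1..n}" for u
  proof (cases "u = 1")
    case True
    then have "mu1 n u n" by (simp add: mu1_def)
    then show ?thesis using u n_ge_3 unfolding step_def by auto
  next
    case False
    then have "mu1 n u (u - 1)" and "u - 1 \<in> {1..n}" using u by (auto simp: mu1_def)
    then show ?thesis using u unfolding step_def by blast
  qed
  then show ?thesis using step_subset by blast
qed

lemma arc_ne_full:
  assumes "c \<le> q" "1 \<le> s" "s \<le> int n - 1"
  shows "arc c s \<noteq> {1..n}"
proof -
  have mem: "nat (s + 1) \<in> {1..n}" using assms by auto
  then have "nat (s + 1) \<notin> arc c s" using assms q_le mem_arc[OF mem, of s c] by auto
  with mem show ?thesis by blast
qed

lemma orbit_arc:
  "t \<le> k \<Longrightarrow> \<exists>c s. int t = (int n - 1) * c + s \<and> 1 \<le> s \<and> s \<le> int n - 1 \<and> -1 \<le> c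
     \<and> (step ^^ t) {n - 1} = arc c s"
proof (induction t)
  case 0
  have "arc (-1) (int n - 1) = {n - 1}"
    using mem_arc[of _ "int n - 1" "-1"] n_ge_3 by (auto simp: arc_def)
  then show ?case using n_ge_3 by (intro exI[of _ "-1"] exI[of _ "int n - 1"]) auto
next
  case (Suc t)
  then obtain c s where cs: "int t = (int n - 1) * c + s" "1 \<le> s" "s \<le> int n - 1" "-1 \<le> c"
    and orbit: "(step ^^ t) {n - 1} = arc c s"
    by auto
  have "c < q \<or> (c = q \<and> s \<le> r)"
    by (rule lex_le_of_mult_add_le[of "int n - 1"]) (use n_ge_3 cs r_ge_1 r_le Suc.prems k_eq in auto)
  then have before: "c < q \<or> (c = q \<and> s < r)" using cs(1) Suc.prems k_eq by auto
  have "(step ^^ Suc t) {n - 1} = arc_next c s"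
    using step_arc[OF cs(4,2,3) before] orbit by simp
  show ?case
  proof (cases "s \<le> int n - 2")
    case True
    then have "(step ^^ Suc t) {n - 1} = arc c (s + 1)"
      using \<open>(step ^^ Suc t) {n - 1} = arc_next c s\<close> by (simp add: arc_next_def)
    moreover have "int (Suc t) = (int n - 1) * c + (s + 1)" using cs(1) by simp
    ultimately show ?thesis using True cs(2,4) by (intro exI[of _ c] exI[of _ "s + 1"]) simp
  next
    case False
    then have "(step ^^ Suc t) {n - 1} = arc (c + 1) 1"
      using \<open>(step ^^ Suc t) {n - 1} = arc_next c s\<close> by (simp add: arc_next_def)
    moreover have "int (Suc t) = (int n - 1) * (c + 1) + 1" using cs(1,3) False by (simp add: algebra_simps)
    ultimately show ?thesis using cs(4) n_ge_3 by (intro exI[of _ "c + 1"] exI[of _ 1]) simp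
  qed
qed

lemma orbit_at_k: "(step ^^ k) {n - 1} = arc q r"
proof -
  obtain c s where cs: "int k = (int n - 1) * c + s" "1 \<le> s" "s \<le> int n - 1"
    and orbit: "(step ^^ k) {n - 1} = arc c s"
    using orbit_arc[OF order_refl] by blast
  have "c < q \<or> (c = q \<and> s \<le> r)"
    by (rule lex_le_of_mult_add_le[of "int n - 1"]) (use n_ge_3 cs r_ge_1 r_le k_eq in auto)
  moreover have "q < c \<or> (q = c \<and> r \<le> s)"
    by (rule lex_le_of_mult_add_le[of "int n - 1"]) (use n_ge_3 cs r_ge_1 r_le k_eq in auto)
  ultimately have "c = q" and "s = r" by auto
  then show ?thesis using orbit by simp
qed

lemma orbit_full_iff: "(step ^^ t) {n - 1} = {1..n} \<longleftrightarrow> k + 1 \<le> t"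
proof
  assume full: "(step ^^ t) {n - 1} = {1..n}"
  show "k + 1 \<le> t"
  proof (rule ccontr)
    assume "\<not> k + 1 \<le> t"
    then have "t \<le> k" by simp
    then obtain c s where cs: "int t = (int n - 1) * c + s" "1 \<le> s" "s \<le> int n - 1"
      and orbit: "(step ^^ t) {n - 1} = arc c s"
      using orbit_arc by blast
    have "c < q \<or> (c = q \<and> s \<le> r)"
      by (rule lex_le_of_mult_add_le[of "int n - 1"]) (use n_ge_3 cs r_ge_1 r_le k_eq \<open>t \<le> k\<close> in auto)
    then show False using arc_ne_full[OF _ cs(2,3)] orbit full by auto
  qed
next
  assume "k + 1 \<le> t"
  then show "(step ^^ t) {n - 1} = {1..n}"
  proof (induction t)
    case (Suc t)
    show ?case
    proof (cases "t = k")
      case True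
      then show ?thesis using orbit_at_k step_arc_q_r by simp
    next
      case False
      then show ?thesis using Suc step_full by simp
    qed
  qed simp
qed

lemma step_singleton: "1 \<le> x \<Longrightarrow> x \<le> n - 2 \<Longrightarrow> step {x} = {x + 1}"
  unfolding step_def using alpha_ne_beta by (auto simp: mu1_def)

lemma funpow_step_singleton: "1 \<le> x \<Longrightarrow> x + i \<le> n - 1 \<Longrightarrow> (step ^^ i) {x} = {x + i}"
proof (induction i)
  case (Suc i)
  then show ?case using step_singleton[of "x + i"] by simp
qed simp

lemma step_singleton_n: "step {n} = {1}"
  using alpha_ne_beta n_ge_3 unfolding step_def by (auto simp: mu1_def)

lemma funpow_step_singleton_full_iff:
  assumes j: "j \<in> {1..n}"
  shows "(step ^^ t) {j} = {1..n} \<longleftrightarrow> (if j = n then k + n else k + n - j) \<le> t"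
proof -
  have singleton_ne_full: "{x} \<noteq> {1..n}" for x
  proof
    assume "{x} = {1..n}"
    then have "1 \<in> {x}" and "2 \<in> {x}" using n_ge_3 by auto
    then show False by simp
  qed
  have below_n: "(step ^^ t) {i} = {1..n} \<longleftrightarrow> k + n - i \<le> t" if i: "1 \<le> i" "i \<le> n - 1" for i t
  proof (cases "t < n - 1 - i")
    case True
    then show ?thesis using funpow_step_singleton[of i t] i singleton_ne_full by auto
  next
    case False
    then obtain d where d: "t = d + (n - 1 - i)" by (metis le_add_diff_inverse2 not_less)
    have "(step ^^ (n - 1 - i)) {i} = {n - 1}"
      using funpow_step_singleton[of i "n - 1 - i"] i by simp
    then have "(step ^^ t) {i} = (step ^^ d) {n - 1}"
      unfolding d funpow_add comp_apply by simp
    then show ?thesis using orbit_full_iff[of d] d i by auto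
  qed
  show ?thesis
  proof (cases "j = n")
    case True
    show ?thesis
    proof (cases t)
      case 0
      then show ?thesis using singleton_ne_full True n_ge_3 by simp
    next
      case (Suc t')
      then have "(step ^^ t) {n} = (step ^^ t') {1}"
        using step_singleton_n by (simp add: funpow_Suc_right del: funpow.simps)
      then show ?thesis using below_n[of 1 t'] n_ge_3 Suc True by auto
    qed
  next
    case False
    then show ?thesis using below_n[of j t] j by auto
  qed
qed

lemma positive_column_tensorA:
  assumes "3 \<le> m" and "j \<in> {1..n}" and "1 \<le> t"
  shows "positive_column n m (tensorA n q r) t j \<longleftrightarrow> (if j = n then k + n else k + n - j) \<le> t"
proof -
  have "positive_column n m (tensorA n q r) t j \<longleftrightarrow> (step ^^ t) {j} = {1..n}"
    using positive_column_iff_support[OF tensorA_nonneg[of n q r] _ assms(2,3)] assms(1)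
    by (simp add: support_step_tensorA)
  then show ?thesis using funpow_step_singleton_full_iff[OF assms(2)] by simp
qed

end

lemma tensorA_paramsI:
  assumes k_le: "int k \<le> int n ^ 2 - 3 * int n + 2" and k_eq: "int k = (int n - 1) * q + r"
    and "0 \<le> q" and "1 \<le> r" and "r \<le> int n - 1"
  shows "tensorA_params n k q r"
proof
  have factor: "int n ^ 2 - 3 * int n + 2 = (int n - 1) * (int n - 2)"
    by (simp add: algebra_simps power2_eq_square)
  show "q \<le> int n - 3"
  proof (rule ccontr)
    assume "\<not> q \<le> int n - 3"
    then have "(int n - 1) * (int n - 2) \<le> (int n - 1) * q"
      using assms by (intro mult_left_mono) auto
    then show False using k_le k_eq factor \<open>1 \<le> r\<close> by linarith
  qed
  then show "3 \<le> n" using \<open>0 \<le> q\<close> by simp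
qed (use assms in auto)

theorem theorem3p3:
  fixes m n k :: nat and q r :: int
  assumes "m \<ge> 3" and "n \<ge> 1"
    and "1 \<le> k" and "int k \<le> int n ^ 2 - 3 * int n + 2"
    and "int k = (int n - 1) * q + r" and "q \<ge> 0" and "1 \<le> r" and "r \<le> int n - 1"
  shows "(\<forall>j\<in>{1..n - 1}. j_primitive n m (tensorA n q r) j
              \<and> gamma_j n m (tensorA n q r) j = k + n - j)
       \<and> j_primitive n m (tensorA n q r) n \<and> gamma_j n m (tensorA n q r) n = k + n
       \<and> primitive n m (tensorA n q r) \<and> prim_degree n m (tensorA n q r) = k + n"
proof -
  interpret tensorA_params n k q r
    using assms(4-8) by (rule tensorA_paramsI)
  define g where "g j = (if j = n then k + n else k + n - j)" for j
  have threshold: "positive_column n m (tensorA n q r) t j \<longleftrightarrow> g j \<le> t"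
    if "j \<in> {1..n}" "1 \<le> t" for j t
    using positive_column_tensorA[OF \<open>m \<ge> 3\<close> that] by (simp add: g_def)
  have g_ge_1: "1 \<le> g j" if "j \<in> {1..n}" for j
    using \<open>1 \<le> k\<close> that by (auto simp: g_def)
  have gamma: "j_primitive n m (tensorA n q r) j \<and> gamma_j n m (tensorA n q r) j = g j"
    if "j \<in> {1..n}" for j
    using gamma_j_eqI[OF g_ge_1 threshold] that by blast
  have "Max (g ` {1..n}) = k + n"
    using \<open>n \<ge> 1\<close> by (intro Max_eqI) (auto simp: g_def)
  then have "primitive n m (tensorA n q r) \<and> prim_degree n m (tensorA n q r) = k + n"
    using prim_degree_eq_Max[OF \<open>n \<ge> 1\<close> g_ge_1 threshold] by simp
  moreover have "n \<in> {1..n}" and "{1..n - 1} \<subseteq> {1..n} - {n}" using \<open>n \<ge> 1\<close> by auto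
  ultimately show ?thesis using gamma by (auto simp: g_def)
qed

end
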